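(* Let $\mathcal{T}$ be an MPQ-tree of an interval graph $G=(V,E)$, and let $(x,y)\in E$ with $node(x)=node(y)=Q$ a Q-node with sections $S_1,\dots,S_k$ and child subtrees $T_1,\dots,T_k$. If either (1) $x$ and $y$ have more than one common section in $Q$ (i.e. $|\{i: x\in S_i \text{ and } y\in S_i\}|\ge 2$), or (2) for some common section $S_i$ of $x$ and $y$ the set $V_i$ does not induce a clique in $G$, then $(x,y)$ is not an interval edge.
   Context: Graphs are finite and simple; for $G=(V,E)$ and $e\in E$, $G-e=(V,E\setminus\{e\})$. An edge $(x,y)\in E$ of an interval graph $G$ is an interval edge if $G-(x,y)$ is an interval graph. An MPQ-tree of an interval graph $G=(V,E)$, $V=\{1,\dots,n\}$, is a rooted plane tree whose nodes are P-nodes and Q-nodes. Each P-node carries a (possibly empty) set of vertices. A Q-node has $k\ge 3$ ordered positions $1,\dots,k$; position $i$ carries a set $S_i\subseteq V$ (the $i$-th section) and a child subtree $T_i$, which may be empty. Every vertex $v$ is assigned to exactly one node $node(v)$: either $v$ lies in the set of the P-node $node(v)$, or $node(v)$ is a Q-node and $v$ lies exactly in the sections $S_{l(v)},\dots,S_{r(v)}$ of it, with $l(v)<r(v)$. For a node with child subtrees $T_1,\dots,T_k$, $V_i$ denotes the set of vertices assigned to nodes of $T_i$ ($V_i=\emptyset$ if $T_i$ is empty). The maximal cliques of $G$ are in bijection with the descending paths from the root which at a P-node continue into one of its children (stopping if there is none) and at a Q-node choose a position $i$ and continue into $T_i$ (stopping if $T_i$ is empty); the clique is the union of the sets of the visited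 P-nodes and the chosen sections. Reading these cliques left to right gives a linear order of the maximal cliques, and the orders obtained this way after arbitrarily permuting children of P-nodes and reversing the positions of Q-nodes are exactly the orders of the maximal cliques of $G$ in which the cliques containing any fixed vertex are consecutive. Moreover, for every Q-node with sections $S_1,\dots,S_k$: (a) $V_1\neq\emptyset$ and $V_k\ne\emptyset$; (b) $S_1\subseteq S_2$ and $S_k\subseteq S_{k-1}$; (c) $S_{i-1}\cap S_i\neq\emptyset$ for $2\le i\le k$; (d) $S_{i-1}\neq S_i$ for $2\le i\le k$; (e) $(S_i\cap S_{i+1})\setminus S_1\neq\emptyset$ and $(S_{i-1}\cap S_i)\setminus S_k\neq\emptyset$ for $2\le i\le k-1$; (f) $(S_{i-1}\cup V_{i-1})\setminus S_i\neq\emptyset$ and $(S_i\cup V_i)\setminus S_{i-1}\neq\emptyset$ for $2\le i\le k$; and further (g) no empty P-node has an empty P-node as its parent, (h) no P-node has exactly one child whose root is a P-node, (i) every child subtree of a P-node is nonempty. *)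

theory Defs
  imports Complex_Main "HOL-Library.Multiset"
begin

definition simple_graph :: "'a set \<Rightarrow> ('a \<times> 'a) set \<Rightarrow> bool" where
  "simple_graph V E \<longleftrightarrow> finite V \<and> E \<subseteq> V \<times> V \<and> sym E \<and> irrefl E"

definition del_edge :: "('a \<times> 'a) set \<Rightarrow> 'a \<Rightarrow> 'a \<Rightarrow> ('a \<times> 'a) set" where
  "del_edge E x y = E - {(x, y), (y, x)}"

definition interval_graph :: "'a set \<Rightarrow> ('a \<times> 'a) set \<Rightarrow> bool" where
  "interval_graph V E \<longleftrightarrow> simple_graph V E \<and>
     (\<exists>a b :: 'a \<Rightarrow> real. (\<forall>v\<in>V. a v \<le> b v) \<and>
        (\<forall>u\<in>V. \<forall>v\<in>V. u \<noteq> v \<longrightarrow> ((u, v) \<in> E \<longleftrightarrow> {a u..b u} \<inter> {a v..b v} \<noteq> {})))"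

definition interval_edge :: "'a set \<Rightarrow> ('a \<times> 'a) set \<Rightarrow> 'a \<Rightarrow> 'a \<Rightarrow> bool" where
  "interval_edge V E x y \<longleftrightarrow> (x, y) \<in> E \<and> interval_graph V (del_edge E x y)"

definition is_clique :: "'a set \<Rightarrow> ('a \<times> 'a) set \<Rightarrow> 'a set \<Rightarrow> bool" where
  "is_clique V E C \<longleftrightarrow> C \<subseteq> V \<and> (\<forall>u\<in>C. \<forall>v\<in>C. u \<noteq> v \<longrightarrow> (u, v) \<in> E)"

definition max_cliques :: "'a set \<Rightarrow> ('a \<times> 'a) set \<Rightarrow> 'a set set" where
  "max_cliques V E = {C. is_clique V E C \<and> (\<forall>D. is_clique V E D \<and> C \<subseteq> D \<longrightarrow> D = C)}"

definition consecutive_orders :: "'a set \<Rightarrow> ('a \<times> 'a) set \<Rightarrow> 'a set list set" where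
  "consecutive_orders V E = {L. distinct L \<and> set L = max_cliques V E \<and>
      (\<forall>v i j k. i \<le> j \<and> j \<le> k \<and> k < length L \<and> v \<in> L ! i \<and> v \<in> L ! k \<longrightarrow> v \<in> L ! j)}"

(* A Q-node carries its positions in order: position i has the section S_i and the
   child subtree T_i, which may be empty (None). *)
datatype 'a mpq = PNode "'a set" "'a mpq list" | QNode "('a set \<times> 'a mpq option) list"

fun own :: "'a mpq \<Rightarrow> 'a set" where
  "own (PNode S ts) = S"
| "own (QNode ps) = (\<Union>p\<in>set ps. fst p)"

inductive subtree_at :: "'a mpq \<Rightarrow> nat list \<Rightarrow> 'a mpq \<Rightarrow> bool" where
  at_root: "subtree_at T [] T"
| at_P: "i < length ts \<Longrightarrow> subtree_at (ts ! i) p T' \<Longrightarrow> subtree_at (PNode S ts) (i # p) T'"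
| at_Q: "i < length ps \<Longrightarrow> snd (ps ! i) = Some t \<Longrightarrow> subtree_at t p T' \<Longrightarrow> subtree_at (QNode ps) (i # p) T'"

definition verts :: "'a mpq \<Rightarrow> 'a set" where
  "verts T = (\<Union>{own T' | T' p. subtree_at T p T'})"

definition verts_opt :: "'a mpq option \<Rightarrow> 'a set" where
  "verts_opt t = (case t of None \<Rightarrow> {} | Some T \<Rightarrow> verts T)"

fun cliques :: "'a mpq \<Rightarrow> 'a set list" where
  "cliques (PNode S ts) = (if ts = [] then [S] else map ((\<union>) S) (concat (map cliques ts)))"
| "cliques (QNode ps) = concat (map (\<lambda>p. case snd p of None \<Rightarrow> [fst p]
                                      | Some t \<Rightarrow> map ((\<union>) (fst p)) (cliques t)) ps)"

inductive requiv :: "'a mpq \<Rightarrow> 'a mpq \<Rightarrow> bool" where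
  req_P: "list_all2 requiv ts us \<Longrightarrow> mset vs = mset us \<Longrightarrow> requiv (PNode S ts) (PNode S vs)"
| req_Q: "list_all2 (\<lambda>p q. fst p = fst q \<and> rel_option requiv (snd p) (snd q)) ps qs
          \<Longrightarrow> requiv (QNode ps) (QNode qs)"
| req_Qrev: "list_all2 (\<lambda>p q. fst p = fst q \<and> rel_option requiv (snd p) (snd q)) ps qs
          \<Longrightarrow> requiv (QNode ps) (QNode (rev qs))"

(* Local conditions at a Q-node with positions ps (0-indexed: S_i = fst (ps ! i),
   V_i = verts_opt (snd (ps ! i))). *)
definition q_node_ok :: "('a set \<times> 'a mpq option) list \<Rightarrow> bool" where
  "q_node_ok ps \<longleftrightarrow> (let k = length ps; S = (\<lambda>i. fst (ps ! i)); Vi = (\<lambda>i. verts_opt (snd (ps ! i))) in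
     k \<ge> 3 \<and>
     (\<forall>v\<in>own (QNode ps). \<exists>l r. l < r \<and> r < k \<and> {i. i < k \<and> v \<in> S i} = {l..r}) \<and>
     Vi 0 \<noteq> {} \<and> Vi (k - 1) \<noteq> {} \<and>
     S 0 \<subseteq> S 1 \<and> S (k - 1) \<subseteq> S (k - 2) \<and>
     (\<forall>i. 1 \<le> i \<and> i < k \<longrightarrow> S (i - 1) \<inter> S i \<noteq> {}) \<and>
     (\<forall>i. 1 \<le> i \<and> i < k \<longrightarrow> S (i - 1) \<noteq> S i) \<and>
     (\<forall>i. 1 \<le> i \<and> i < k - 1 \<longrightarrow> (S i \<inter> S (i + 1)) - S 0 \<noteq> {} \<and> (S (i - 1) \<inter> S i) - S (k - 1) \<noteq> {}) \<and>
     (\<forall>i. 1 \<le> i \<and> i < k \<longrightarrow> (S (i - 1) \<union> Vi (i - 1)) - S i \<noteq> {} \<and> (S i \<union> Vi i) - S (i - 1) \<noteq> {}))"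

(* Local conditions at a P-node: (g), (h); (i) holds by construction of the datatype *)
definition p_node_ok :: "'a set \<Rightarrow> 'a mpq list \<Rightarrow> bool" where
  "p_node_ok S ts \<longleftrightarrow>
     (S = {} \<longrightarrow> (\<forall>t\<in>set ts. \<forall>ts'. t \<noteq> PNode {} ts')) \<and>
     \<not> (length ts = 1 \<and> (\<exists>S' ts'. ts ! 0 = PNode S' ts'))"

definition mpq_tree :: "'a set \<Rightarrow> ('a \<times> 'a) set \<Rightarrow> 'a mpq \<Rightarrow> bool" where
  "mpq_tree V E T \<longleftrightarrow>
     \<comment> \<open>every vertex is assigned to exactly one node\<close>
     verts T = V \<and>
     (\<forall>p q T1 T2. subtree_at T p T1 \<and> subtree_at T q T2 \<and> p \<noteq> q \<longrightarrow> own T1 \<inter> own T2 = {}) \<and>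
     \<comment> \<open>maximal cliques in bijection with the root-to-leaf paths\<close>
     distinct (cliques T) \<and> set (cliques T) = max_cliques V E \<and>
     \<comment> \<open>the orders obtained by reorderings are exactly the consecutive clique orders\<close>
     {cliques T' | T'. requiv T T'} = consecutive_orders V E \<and>
     \<comment> \<open>structural conditions\<close>
     (\<forall>p ps. subtree_at T p (QNode ps) \<longrightarrow> q_node_ok ps) \<and>
     (\<forall>p S ts. subtree_at T p (PNode S ts) \<longrightarrow> p_node_ok S ts)"

end

theory Submission
  imports Defs
begin

(*
  The edge (x, y) is not an interval edge as soon as there are vertices u and w, each adjacent
  to both x and y, but not to each other: then x u y w is an induced 4-cycle of G - (x, y), and
  no interval graph contains one.

  The tree supplies u and w. In case (2) they are two non-adjacent vertices of V_i; each lies in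
  a maximal clique together with S_i, which contains x and y. In case (1) the sections containing
  x and y form an interval, so x and y share two consecutive sections S_a, S_(a+1). Condition (f)
  gives u in (S_a \<union> V_a) - S_(a+1) and w in (S_(a+1) \<union> V_(a+1)) - S_a. A maximal clique meets
  the vertices of the Q-node subtree within a single position S_j \<union> V_j; containing u forces
  j \<le> a and containing w forces j \<ge> a + 1, so u and w are not adjacent.
*)

lemma subtree_at_trans:
  "subtree_at T p R \<Longrightarrow> subtree_at R q U \<Longrightarrow> subtree_at T (p @ q) U"
  by (induction rule: subtree_at.induct) (auto intro: subtree_at.intros)

lemma mem_verts_iff: "v \<in> verts T \<longleftrightarrow> (\<exists>p R. subtree_at T p R \<and> v \<in> own R)"
  unfolding verts_def by blast

lemma own_subset_verts: "own T \<subseteq> verts T"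
  unfolding verts_def using subtree_at.at_root by blast

lemma verts_subtree_at_subset:
  assumes "subtree_at T p R"
  shows "verts R \<subseteq> verts T"
proof
  fix v assume "v \<in> verts R"
  then obtain q U where "subtree_at R q U" "v \<in> own U"
    unfolding mem_verts_iff by blast
  then show "v \<in> verts T"
    using subtree_at_trans[OF assms] mem_verts_iff by metis
qed

lemma verts_PNode: "verts (PNode S ts) = S \<union> (\<Union>t\<in>set ts. verts t)"
proof
  show "verts (PNode S ts) \<subseteq> S \<union> (\<Union>t\<in>set ts. verts t)"
  proof
    fix v assume "v \<in> verts (PNode S ts)"
    then obtain p R where "subtree_at (PNode S ts) p R" "v \<in> own R"
      unfolding mem_verts_iff by blast
    then show "v \<in> S \<union> (\<Union>t\<in>set ts. verts t)"
    proof (cases rule: subtree_at.cases)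
      case (at_P i p')
      then have "v \<in> verts (ts ! i)"
        using \<open>v \<in> own R\<close> unfolding mem_verts_iff by blast
      then show ?thesis using \<open>i < length ts\<close> by auto
    qed simp
  qed
  show "S \<union> (\<Union>t\<in>set ts. verts t) \<subseteq> verts (PNode S ts)"
  proof (intro Un_least UN_least)
    show "S \<subseteq> verts (PNode S ts)"
      using own_subset_verts[of "PNode S ts"] by simp
    fix t assume "t \<in> set ts"
    then obtain i where "i < length ts" "t = ts ! i"
      by (auto simp: in_set_conv_nth)
    then show "verts t \<subseteq> verts (PNode S ts)"
      using verts_subtree_at_subset[OF subtree_at.at_P[OF _ subtree_at.at_root]] by simp
  qed
qed

lemma verts_QNode: "verts (QNode ps) = own (QNode ps) \<union> (\<Union>p\<in>set ps. verts_opt (snd p))"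
proof
  show "verts (QNode ps) \<subseteq> own (QNode ps) \<union> (\<Union>p\<in>set ps. verts_opt (snd p))"
  proof
    fix v assume "v \<in> verts (QNode ps)"
    then obtain p R where "subtree_at (QNode ps) p R" "v \<in> own R"
      unfolding mem_verts_iff by blast
    then show "v \<in> own (QNode ps) \<union> (\<Union>p\<in>set ps. verts_opt (snd p))"
    proof (cases rule: subtree_at.cases)
      case (at_Q i t p')
      then have "v \<in> verts t"
        using \<open>v \<in> own R\<close> unfolding mem_verts_iff by blast
      then have "v \<in> verts_opt (snd (ps ! i))"
        using at_Q by (simp add: verts_opt_def)
      then show ?thesis using \<open>i < length ps\<close> by auto
    qed simp
  qed
  show "own (QNode ps) \<union> (\<Union>p\<in>set ps. verts_opt (snd p)) \<subseteq> verts (QNode ps)"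
  proof (intro Un_least UN_least)
    show "own (QNode ps) \<subseteq> verts (QNode ps)"
      by (rule own_subset_verts)
    fix q assume "q \<in> set ps"
    then obtain i where "i < length ps" "q = ps ! i"
      by (auto simp: in_set_conv_nth)
    then show "verts_opt (snd q) \<subseteq> verts (QNode ps)"
      using verts_subtree_at_subset[OF subtree_at.at_Q[OF _ _ subtree_at.at_root]]
      by (auto simp: verts_opt_def split: option.splits)
  qed
qed

lemma cliques_subset_verts: "c \<in> set (cliques T) \<Longrightarrow> c \<subseteq> verts T"
proof (induction T arbitrary: c)
  case (PNode S ts)
  then show ?case by (force simp: verts_PNode split: if_splits)
next
  case (QNode ps)
  then obtain q where q: "q \<in> set ps"
    "c \<in> set (case snd q of None \<Rightarrow> [fst q] | Some t \<Rightarrow> map ((\<union>) (fst q)) (cliques t))"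
    by auto
  show ?case
  proof (cases q)
    case (Pair S opt)
    show ?thesis
    proof (cases opt)
      case None
      then show ?thesis using q Pair by (auto simp: verts_QNode)
    next
      case (Some t)
      then obtain c' where "c' \<in> set (cliques t)" "c = S \<union> c'"
        using q Pair by auto
      moreover have "c' \<subseteq> verts t"
        using QNode.IH[OF q(1)] Pair Some calculation(1) by simp
      ultimately show ?thesis using q Pair Some by (force simp: verts_QNode verts_opt_def)
    qed
  qed
qed

lemma section_subset_own: "i < length ps \<Longrightarrow> fst (ps ! i) \<subseteq> own (QNode ps)"
  by (auto intro!: bexI[of _ "ps ! i"])

lemma bex_set_conv_ex_nth: "(\<exists>x\<in>set xs. P x) \<longleftrightarrow> (\<exists>i<length xs. P (xs ! i))"
  by (metis in_set_conv_nth)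

lemma mem_cliques_PNode_iff:
  "ts \<noteq> [] \<Longrightarrow> c \<in> set (cliques (PNode S ts)) \<longleftrightarrow>
     (\<exists>i<length ts. \<exists>c'\<in>set (cliques (ts ! i)). c = S \<union> c')"
  by (simp add: image_iff) (rule bex_set_conv_ex_nth)

lemma mem_cliques_QNode_iff:
  "c \<in> set (cliques (QNode ps)) \<longleftrightarrow>
     (\<exists>j<length ps. (snd (ps ! j) = None \<and> c = fst (ps ! j)) \<or>
        (\<exists>t c'. snd (ps ! j) = Some t \<and> c' \<in> set (cliques t) \<and> c = fst (ps ! j) \<union> c'))"
proof -
  have "c \<in> set (case snd q of None \<Rightarrow> [fst q] | Some t \<Rightarrow> map ((\<union>) (fst q)) (cliques t)) \<longleftrightarrow>
    (snd q = None \<and> c = fst q) \<or> (\<exists>t c'. snd q = Some t \<and> c' \<in> set (cliques t) \<and> c = fst q \<union> c')"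
    for q :: "'a set \<times> 'a mpq option"
    by (cases "snd q") auto
  then show ?thesis
    by simp (rule bex_set_conv_ex_nth)
qed

lemma QNode_leaf_in_cliques:
  "j < length ps \<Longrightarrow> snd (ps ! j) = None \<Longrightarrow> fst (ps ! j) \<in> set (cliques (QNode ps))"
  by (rule mem_cliques_QNode_iff[THEN iffD2]) blast

lemma QNode_child_in_cliques:
  "j < length ps \<Longrightarrow> snd (ps ! j) = Some t \<Longrightarrow> c \<in> set (cliques t) \<Longrightarrow>
     fst (ps ! j) \<union> c \<in> set (cliques (QNode ps))"
  by (rule mem_cliques_QNode_iff[THEN iffD2]) blast

lemma cliques_nonempty:
  assumes "\<And>p qs. subtree_at T p (QNode qs) \<Longrightarrow> qs \<noteq> []"
  shows "cliques T \<noteq> []"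
  using assms
proof (induction T)
  case (PNode S ts)
  show ?case
  proof (cases ts)
    case (Cons t ts')
    have "subtree_at (PNode S ts) (0 # p) (QNode qs)" if "subtree_at t p (QNode qs)" for p qs
      using subtree_at.at_P[of 0 ts] that Cons by simp
    moreover have "t \<in> set ts" using Cons by simp
    ultimately have "cliques t \<noteq> []"
      using PNode.IH PNode.prems by blast
    then show ?thesis using Cons by simp
  qed simp
next
  case (QNode ps)
  then obtain S opt ps' where ps: "ps = (S, opt) # ps'"
    using subtree_at.at_root by (metis list.exhaust prod.exhaust)
  show ?case
  proof (cases opt)
    case (Some t)
    have "subtree_at (QNode ps) (0 # p) (QNode qs)" if "subtree_at t p (QNode qs)" for p qs
      using subtree_at.at_Q[of 0 ps t] that ps Some by simp
    moreover have "(S, opt) \<in> set ps" "opt \<in> Basic_BNFs.snds (S, opt)" "t \<in> set_option opt"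
      using ps Some by auto
    ultimately have "cliques t \<noteq> []"
      using QNode.IH QNode.prems by blast
    then show ?thesis using ps Some by simp
  qed (simp add: ps)
qed

lemma subtree_at_clique_extends:
  "subtree_at T p R \<Longrightarrow> c \<in> set (cliques R) \<Longrightarrow> \<exists>C\<in>set (cliques T). c \<subseteq> C"
proof (induction arbitrary: c rule: subtree_at.induct)
  case (at_P i ts p T' S)
  then obtain C where "C \<in> set (cliques (ts ! i))" "c \<subseteq> C" by blast
  moreover have "S \<union> C \<in> set (cliques (PNode S ts))"
    using at_P(1) calculation(1) mem_cliques_PNode_iff[of ts "S \<union> C" S] by auto
  ultimately show ?case by blast
next
  case (at_Q i ps t p T')
  then obtain C where "C \<in> set (cliques t)" "c \<subseteq> C" by blast
  moreover have "fst (ps ! i) \<union> C \<in> set (cliques (QNode ps))"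
    using at_Q(1,2) calculation(1) mem_cliques_QNode_iff[of "fst (ps ! i) \<union> C" ps] by auto
  ultimately show ?case by blast
qed blast

definition own_disjoint :: "'a mpq \<Rightarrow> bool" where
  "own_disjoint T \<longleftrightarrow>
     (\<forall>p q T1 T2. subtree_at T p T1 \<and> subtree_at T q T2 \<and> p \<noteq> q \<longrightarrow> own T1 \<inter> own T2 = {})"

lemma own_disjoint_subtree_at:
  assumes "own_disjoint T" "subtree_at T p R"
  shows "own_disjoint R"
  unfolding own_disjoint_def
proof (intro allI impI)
  fix q q' T1 T2 assume "subtree_at R q T1 \<and> subtree_at R q' T2 \<and> q \<noteq> q'"
  then show "own T1 \<inter> own T2 = {}"
    using assms subtree_at_trans[OF assms(2)] unfolding own_disjoint_def by blast
qed

lemma own_disjoint_verts_child: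
  assumes "own_disjoint T" "subtree_at T [i] t"
  shows "own T \<inter> verts t = {}"
proof -
  have "own T \<inter> own U = {}" if "subtree_at t q U" for q U
    using assms subtree_at.at_root subtree_at_trans[OF assms(2) that]
    unfolding own_disjoint_def by fastforce
  then show ?thesis unfolding verts_def by blast
qed

lemma own_disjoint_verts_children:
  assumes "own_disjoint T" "subtree_at T [i] t" "subtree_at T [j] t'" "i \<noteq> j"
  shows "verts t \<inter> verts t' = {}"
proof -
  have "own U \<inter> own U' = {}" if "subtree_at t q U" "subtree_at t' q' U'" for q q' U U'
    using assms(1,4) subtree_at_trans[OF assms(2) that(1)] subtree_at_trans[OF assms(3) that(2)]
    unfolding own_disjoint_def by fastforce
  then show ?thesis unfolding verts_def by blast
qed

lemma own_disjoint_clique_inter_verts: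
  assumes "subtree_at T p R" "own_disjoint T" "C \<in> set (cliques T)"
  shows "C \<inter> verts R = {} \<or> C \<inter> verts R \<in> set (cliques R)"
  using assms
proof (induction arbitrary: C rule: subtree_at.induct)
  case (at_root T)
  then show ?case using cliques_subset_verts by (metis inf.absorb1)
next
  case (at_P i ts p R S)
  have child: "subtree_at (PNode S ts) [k] (ts ! k)" if "k < length ts" for k
    using subtree_at.at_P[OF that subtree_at.at_root] .
  have "ts \<noteq> []" using at_P.hyps(1) by auto
  then obtain k c' where k: "k < length ts" "c' \<in> set (cliques (ts ! k))" "C = S \<union> c'"
    using mem_cliques_PNode_iff[THEN iffD1, OF _ at_P.prems(2)] by blast
  have "S \<inter> verts R = {}"
    using own_disjoint_verts_child[OF at_P.prems(1) child[OF at_P.hyps(1)]]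
      verts_subtree_at_subset[OF at_P.hyps(2)] by auto
  show ?case
  proof (cases "k = i")
    case True
    then have "C \<inter> verts R = c' \<inter> verts R" using k \<open>S \<inter> verts R = {}\<close> by auto
    then show ?thesis
      using at_P.IH[OF own_disjoint_subtree_at[OF at_P.prems(1) child[OF at_P.hyps(1)]]] k True
      by auto
  next
    case False
    then have "verts (ts ! k) \<inter> verts R = {}"
      using own_disjoint_verts_children[OF at_P.prems(1) child[OF k(1)] child[OF at_P.hyps(1)]]
        verts_subtree_at_subset[OF at_P.hyps(2)] by auto
    then show ?thesis
      using k \<open>S \<inter> verts R = {}\<close> cliques_subset_verts[OF k(2)] by auto
  qed
next
  case (at_Q i ps t p R)
  have child: "subtree_at (QNode ps) [k] t'" if "k < length ps" "snd (ps ! k) = Some t'" for k t'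
    using subtree_at.at_Q[OF that subtree_at.at_root] .
  have R_sub: "verts R \<subseteq> verts t"
    using verts_subtree_at_subset[OF at_Q.hyps(3)] .
  obtain k where k: "k < length ps" and
    C: "(snd (ps ! k) = None \<and> C = fst (ps ! k)) \<or>
     (\<exists>t' c'. snd (ps ! k) = Some t' \<and> c' \<in> set (cliques t') \<and> C = fst (ps ! k) \<union> c')"
    using mem_cliques_QNode_iff[THEN iffD1, OF at_Q.prems(2)] by blast
  have S_k: "fst (ps ! k) \<inter> verts R = {}"
    using own_disjoint_verts_child[OF at_Q.prems(1) child[OF at_Q.hyps(1,2)]] R_sub
      section_subset_own[OF k] by blast
  from C show ?case
  proof (elim disjE exE conjE)
    fix t' c' assume t': "snd (ps ! k) = Some t'" "c' \<in> set (cliques t')" "C = fst (ps ! k) \<union> c'"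
    show ?thesis
    proof (cases "k = i")
      case True
      then have "C \<inter> verts R = c' \<inter> verts R" "t' = t"
        using t' at_Q.hyps(2) S_k by auto
      then show ?thesis
        using at_Q.IH[OF own_disjoint_subtree_at[OF at_Q.prems(1) child[OF at_Q.hyps(1,2)]]] t'
        by auto
    next
      case False
      then have "verts t' \<inter> verts R = {}"
        using own_disjoint_verts_children[OF at_Q.prems(1) child[OF k t'(1)] child[OF at_Q.hyps(1,2)]]
          R_sub by auto
      then show ?thesis
        using t' S_k cliques_subset_verts[OF t'(2)] by auto
    qed
  qed (use S_k in simp)
qed

lemma interval_graph_no_induced_C4:
  assumes "interval_graph V E" "{x, y, u, w} \<subseteq> V" "x \<noteq> y" "u \<noteq> w"
    and "(x, y) \<notin> E" "(u, w) \<notin> E"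
    and "(x, u) \<in> E" "(x, w) \<in> E" "(y, u) \<in> E" "(y, w) \<in> E"
  shows False
proof -
  obtain a b :: "'a \<Rightarrow> real" where le: "\<forall>v\<in>V. a v \<le> b v"
    and meet: "\<forall>v\<in>V. \<forall>v'\<in>V. v \<noteq> v' \<longrightarrow> ((v, v') \<in> E \<longleftrightarrow> {a v..b v} \<inter> {a v'..b v'} \<noteq> {})"
    using assms(1) unfolding interval_graph_def by blast
  have "irrefl E"
    using assms(1) unfolding interval_graph_def simple_graph_def by blast
  then have "x \<noteq> u" "x \<noteq> w" "y \<noteq> u" "y \<noteq> w"
    using assms(7-10) unfolding irrefl_def by auto
  then have "a x \<le> b u" "a u \<le> b x" "a x \<le> b w" "a w \<le> b x"
    "a y \<le> b u" "a u \<le> b y" "a y \<le> b w" "a w \<le> b y"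
    and "\<not> (a x \<le> b y \<and> a y \<le> b x)" "\<not> (a u \<le> b w \<and> a w \<le> b u)"
    using meet le assms(2-10) by auto
  moreover have "a x \<le> b x" "a y \<le> b y" "a u \<le> b u" "a w \<le> b w"
    using le assms(2) by auto
  \<comment> \<open>u and w both meet the disjoint intervals of x and y, so both cover the gap between them\<close>
  ultimately show False by linarith
qed

lemma max_clique_superset:
  assumes "finite V" "is_clique V E D"
  shows "\<exists>C\<in>max_cliques V E. D \<subseteq> C"
proof -
  let ?A = "{C. is_clique V E C \<and> D \<subseteq> C}"
  have "?A \<subseteq> Pow V"
    unfolding is_clique_def by blast
  then have "finite ?A"
    using assms(1) by (simp add: finite_subset)
  moreover have "D \<in> ?A" using assms(2) by simp
  ultimately obtain C where C: "C \<in> ?A" "\<forall>C'\<in>?A. C \<subseteq> C' \<longrightarrow> C = C'"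
    using finite_has_maximal[of ?A] by blast
  then have "C \<in> max_cliques V E"
    unfolding max_cliques_def by blast
  then show ?thesis using C(1) by blast
qed

lemma not_interval_edge_if_nonadjacent_in_cliques:
  assumes "is_clique V E C1" "is_clique V E C2" "{x, y, u} \<subseteq> C1" "{x, y, w} \<subseteq> C2"
    and "x \<noteq> y" "u \<noteq> w" "(u, w) \<notin> E"
  shows "\<not> interval_edge V E x y"
proof
  assume "interval_edge V E x y"
  then have "interval_graph V (del_edge E x y)"
    unfolding interval_edge_def by blast
  moreover have "{x, y, u, w} \<subseteq> V"
    using assms(1-4) unfolding is_clique_def by auto
  \<comment> \<open>u = x, say, would make u and w adjacent, both lying in C2\<close>
  moreover have uw: "u \<notin> {x, y}" "w \<notin> {x, y}"
    using assms(1-7) unfolding is_clique_def by auto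
  moreover have "(x, u) \<in> E" "(y, u) \<in> E" "(x, w) \<in> E" "(y, w) \<in> E"
    using assms(1-5) uw unfolding is_clique_def by auto
  ultimately show False
    using interval_graph_no_induced_C4[of V "del_edge E x y" x y u w] assms(5-7)
    unfolding del_edge_def by auto
qed

locale mpq_q_node =
  fixes V :: "'a set" and E :: "('a \<times> 'a) set" and T :: "'a mpq"
    and pos :: "nat list" and ps :: "('a set \<times> 'a mpq option) list"
  assumes graph: "interval_graph V E"
    and tree: "mpq_tree V E T"
    and at_pos: "subtree_at T pos (QNode ps)"
begin

abbreviation sec :: "nat \<Rightarrow> 'a set" where
  "sec i \<equiv> fst (ps ! i)"

abbreviation child_verts :: "nat \<Rightarrow> 'a set" where
  "child_verts i \<equiv> verts_opt (snd (ps ! i))"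

lemma finite_V: "finite V"
  and sym_E: "sym E"
  and irrefl_E: "irrefl E"
  using graph unfolding interval_graph_def simple_graph_def by auto

lemma set_cliques_T: "set (cliques T) = max_cliques V E"
  using tree unfolding mpq_tree_def by blast

lemma own_disjoint_T: "own_disjoint T"
  using tree unfolding mpq_tree_def own_disjoint_def by blast

lemma q_node_ok_subtree: "subtree_at T p (QNode qs) \<Longrightarrow> q_node_ok qs"
  using tree unfolding mpq_tree_def by blast

lemma sections_containing_interval:
  assumes "v \<in> own (QNode ps)"
  shows "\<exists>l r. {i. i < length ps \<and> v \<in> sec i} = {l..r}"
proof -
  have "\<forall>v\<in>own (QNode ps). \<exists>l r. l < r \<and> r < length ps \<and> {i. i < length ps \<and> v \<in> sec i} = {l..r}"
    using q_node_ok_subtree[OF at_pos] unfolding q_node_ok_def Let_def by (elim conjE)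
  then show ?thesis using assms by blast
qed

lemma section_step_new_vertices:
  assumes "Suc a < length ps"
  shows "(sec a \<union> child_verts a) - sec (Suc a) \<noteq> {}"
    and "(sec (Suc a) \<union> child_verts (Suc a)) - sec a \<noteq> {}"
proof -
  have step: "\<forall>i. 1 \<le> i \<and> i < length ps \<longrightarrow> (sec (i - 1) \<union> child_verts (i - 1)) - sec i \<noteq> {} \<and>
      (sec i \<union> child_verts i) - sec (i - 1) \<noteq> {}"
    using q_node_ok_subtree[OF at_pos] unfolding q_node_ok_def Let_def by (elim conjE)
  show "(sec a \<union> child_verts a) - sec (Suc a) \<noteq> {}"
    and "(sec (Suc a) \<union> child_verts (Suc a)) - sec a \<noteq> {}"
    using spec[OF step, of "Suc a"] assms by simp_all
qed

lemma verts_T: "verts T = V"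
  using tree unfolding mpq_tree_def by (elim conjE)

lemma verts_Q_subset_V: "verts (QNode ps) \<subseteq> V"
  using verts_subtree_at_subset[OF at_pos] unfolding verts_T .

lemma child_verts_subset: "i < length ps \<Longrightarrow> child_verts i \<subseteq> verts (QNode ps)"
  unfolding verts_QNode by (auto intro!: bexI[of _ "ps ! i"])

lemma subtree_at_child:
  "i < length ps \<Longrightarrow> snd (ps ! i) = Some t \<Longrightarrow> subtree_at T (pos @ [i]) t"
  using subtree_at_trans[OF at_pos subtree_at.at_Q[OF _ _ subtree_at.at_root]] .

lemma own_inter_child_verts: "i < length ps \<Longrightarrow> own (QNode ps) \<inter> child_verts i = {}"
  using own_disjoint_verts_child[OF own_disjoint_subtree_at[OF own_disjoint_T at_pos]
      subtree_at.at_Q[OF _ _ subtree_at.at_root]]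
  by (auto simp: verts_opt_def split: option.splits)

lemma child_verts_disjoint:
  "i < length ps \<Longrightarrow> j < length ps \<Longrightarrow> i \<noteq> j \<Longrightarrow> child_verts i \<inter> child_verts j = {}"
  using own_disjoint_verts_children[OF own_disjoint_subtree_at[OF own_disjoint_T at_pos]
      subtree_at.at_Q[OF _ _ subtree_at.at_root] subtree_at.at_Q[OF _ _ subtree_at.at_root]]
  by (auto simp: verts_opt_def split: option.splits)

lemma mem_sec_between:
  assumes "i < j" "j < length ps"
    and "v \<in> sec i \<union> child_verts i" "v \<in> sec j \<union> child_verts j"
    and "i \<le> l" "l \<le> j"
  shows "v \<in> sec l"
proof -
  have i: "i < length ps" using assms(1,2) by simp
  have own: "v \<in> own (QNode ps)"
  proof (rule ccontr)
    assume "v \<notin> own (QNode ps)"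
    then have "v \<in> child_verts i" "v \<in> child_verts j"
      using assms(2-4) i section_subset_own[of i ps] section_subset_own[of j ps] by blast+
    then show False
      using child_verts_disjoint[OF i assms(2)] assms(1) by blast
  qed
  then have "v \<in> sec i" "v \<in> sec j"
    using assms(2-4) i own_inter_child_verts[of i] own_inter_child_verts[of j] by blast+
  obtain l0 r0 where lr: "{k. k < length ps \<and> v \<in> sec k} = {l0..r0}"
    using sections_containing_interval[OF own] by blast
  have "i \<in> {l0..r0}" "j \<in> {l0..r0}"
    unfolding lr[symmetric] using \<open>v \<in> sec i\<close> \<open>v \<in> sec j\<close> i assms(2) by simp_all
  then have "l \<in> {k. k < length ps \<and> v \<in> sec k}"
    unfolding lr using assms(5,6) by simp
  then show ?thesis by simp
qed

lemma cliques_subtree_nonempty: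
  assumes "subtree_at T p R"
  shows "cliques R \<noteq> []"
proof (rule cliques_nonempty)
  fix q qs assume "subtree_at R q (QNode qs)"
  then have "q_node_ok qs"
    using q_node_ok_subtree subtree_at_trans[OF assms] by blast
  then show "qs \<noteq> []"
    unfolding q_node_ok_def Let_def by auto
qed

lemma max_clique_through_position:
  assumes "j < length ps" "v \<in> sec j \<union> child_verts j"
  shows "\<exists>C\<in>max_cliques V E. insert v (sec j) \<subseteq> C"
proof -
  obtain c where c: "c \<in> set (cliques (QNode ps))" "insert v (sec j) \<subseteq> c"
  proof (cases "snd (ps ! j)")
    case None
    then have "v \<in> sec j" using assms(2) by (simp add: verts_opt_def)
    then show ?thesis
      using that QNode_leaf_in_cliques[OF assms(1) None] by blast
  next
    case (Some t)
    obtain c' where c': "c' \<in> set (cliques t)" "v \<in> sec j \<union> c'"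
    proof (cases "v \<in> verts t")
      case True
      then have "v \<in> V"
        using verts_Q_subset_V child_verts_subset[OF assms(1)] Some unfolding verts_opt_def by auto
      then have "is_clique V E {v}" by (simp add: is_clique_def)
      then obtain C where "C \<in> max_cliques V E" "v \<in> C"
        using max_clique_superset[OF finite_V] by blast
      then have "C \<inter> verts t = {} \<or> C \<inter> verts t \<in> set (cliques t)"
        using own_disjoint_clique_inter_verts[OF subtree_at_child[OF assms(1) Some] own_disjoint_T]
        unfolding set_cliques_T by blast
      then have "C \<inter> verts t \<in> set (cliques t)"
        using True \<open>v \<in> C\<close> by blast
      moreover have "v \<in> sec j \<union> (C \<inter> verts t)"
        using True \<open>v \<in> C\<close> by blast
      ultimately show ?thesis by (rule that)
    next
      case False
      then have "v \<in> sec j" using assms(2) Some by (simp add: verts_opt_def)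
      moreover obtain c' where "c' \<in> set (cliques t)"
        using cliques_subtree_nonempty[OF subtree_at_child[OF assms(1) Some]] by (meson list.set_sel(1))
      ultimately show ?thesis using that by blast
    qed
    show ?thesis
    proof (rule that)
      show "sec j \<union> c' \<in> set (cliques (QNode ps))"
        by (rule QNode_child_in_cliques[OF assms(1) Some c'(1)])
      show "insert v (sec j) \<subseteq> sec j \<union> c'"
        using c'(2) by blast
    qed
  qed
  then obtain C where "C \<in> set (cliques T)" "c \<subseteq> C"
    using subtree_at_clique_extends[OF at_pos] by blast
  then show ?thesis
    using c(2) unfolding set_cliques_T by blast
qed

lemma max_clique_at_one_position:
  assumes "C \<in> max_cliques V E" "C \<inter> verts (QNode ps) \<noteq> {}"
  shows "\<exists>j<length ps. C \<inter> verts (QNode ps) \<subseteq> sec j \<union> child_verts j"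
proof -
  have "C \<inter> verts (QNode ps) \<in> set (cliques (QNode ps))"
    using own_disjoint_clique_inter_verts[OF at_pos own_disjoint_T] assms set_cliques_T by blast
  then obtain j where "j < length ps" and
    "(snd (ps ! j) = None \<and> C \<inter> verts (QNode ps) = sec j) \<or>
     (\<exists>t c'. snd (ps ! j) = Some t \<and> c' \<in> set (cliques t) \<and> C \<inter> verts (QNode ps) = sec j \<union> c')"
    using mem_cliques_QNode_iff[THEN iffD1] by blast
  then show ?thesis
    using cliques_subset_verts unfolding verts_opt_def by fastforce
qed

lemma nonadjacent_if_separated:
  assumes "Suc a < length ps"
    and u: "u \<in> sec a \<union> child_verts a" "u \<notin> sec (Suc a)"
    and w: "w \<in> sec (Suc a) \<union> child_verts (Suc a)" "w \<notin> sec a"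
  shows "(u, w) \<notin> E"
proof
  assume "(u, w) \<in> E"
  have "u \<in> verts (QNode ps)" "w \<in> verts (QNode ps)"
    using u(1) w(1) assms(1) child_verts_subset[of a] child_verts_subset[of "Suc a"]
      section_subset_own[of a ps] section_subset_own[of "Suc a" ps] own_subset_verts[of "QNode ps"]
    by auto
  then have "is_clique V E {u, w}"
    using \<open>(u, w) \<in> E\<close> sym_E verts_Q_subset_V unfolding is_clique_def sym_def by auto
  then obtain C where "C \<in> max_cliques V E" "{u, w} \<subseteq> C"
    using max_clique_superset[OF finite_V] by blast
  then obtain j where j: "j < length ps" "C \<inter> verts (QNode ps) \<subseteq> sec j \<union> child_verts j"
    using max_clique_at_one_position \<open>u \<in> verts (QNode ps)\<close> by blast
  then have u_j: "u \<in> sec j \<union> child_verts j" and w_j: "w \<in> sec j \<union> child_verts j"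
    using \<open>{u, w} \<subseteq> C\<close> \<open>u \<in> verts (QNode ps)\<close> \<open>w \<in> verts (QNode ps)\<close> by auto
  have "j \<le> a"
  proof (rule ccontr)
    assume "\<not> j \<le> a"
    then have "u \<in> sec (Suc a)"
      using mem_sec_between[OF _ j(1) u(1) u_j] by simp
    with u(2) show False ..
  qed
  moreover have "Suc a \<le> j"
  proof (rule ccontr)
    assume "\<not> Suc a \<le> j"
    then have "w \<in> sec a"
      using mem_sec_between[OF _ assms(1) w_j w(1)] by simp
    with w(2) show False ..
  qed
  ultimately show False by simp
qed

lemma not_interval_edge_if_consecutive_common_sections:
  assumes "Suc a < length ps" "(x, y) \<in> E"
    and "{x, y} \<subseteq> sec a" "{x, y} \<subseteq> sec (Suc a)"
  shows "\<not> interval_edge V E x y"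
proof -
  obtain u where u: "u \<in> sec a \<union> child_verts a" "u \<notin> sec (Suc a)"
    using section_step_new_vertices(1)[OF assms(1)] by blast
  obtain w where w: "w \<in> sec (Suc a) \<union> child_verts (Suc a)" "w \<notin> sec a"
    using section_step_new_vertices(2)[OF assms(1)] by blast
  obtain C1 where C1: "C1 \<in> max_cliques V E" "insert u (sec a) \<subseteq> C1"
    using max_clique_through_position[OF _ u(1)] assms(1) by auto
  obtain C2 where C2: "C2 \<in> max_cliques V E" "insert w (sec (Suc a)) \<subseteq> C2"
    using max_clique_through_position[OF assms(1) w(1)] by blast
  have "u \<noteq> w"
    using mem_sec_between[of a "Suc a" u "Suc a"] u w assms(1) by auto
  moreover have "(u, w) \<notin> E"
    using nonadjacent_if_separated[OF assms(1) u w] .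
  moreover have "x \<noteq> y"
    using assms(2) irrefl_E unfolding irrefl_def by auto
  ultimately show ?thesis
    using not_interval_edge_if_nonadjacent_in_cliques[of V E C1 C2 x y u w] C1 C2 assms(3,4)
    unfolding max_cliques_def by auto
qed

lemma not_interval_edge_if_child_not_clique:
  assumes "i < length ps" "(x, y) \<in> E" "{x, y} \<subseteq> sec i"
    and "\<not> is_clique V E (child_verts i)"
  shows "\<not> interval_edge V E x y"
proof -
  have "child_verts i \<subseteq> V"
    using child_verts_subset[OF assms(1)] verts_Q_subset_V by blast
  then obtain u w where uw: "u \<in> child_verts i" "w \<in> child_verts i" "u \<noteq> w" "(u, w) \<notin> E"
    using assms(4) unfolding is_clique_def by blast
  obtain C1 where C1: "C1 \<in> max_cliques V E" "insert u (sec i) \<subseteq> C1"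
    using max_clique_through_position[OF assms(1)] uw(1) by blast
  obtain C2 where C2: "C2 \<in> max_cliques V E" "insert w (sec i) \<subseteq> C2"
    using max_clique_through_position[OF assms(1)] uw(2) by blast
  have "x \<noteq> y"
    using assms(2) irrefl_E unfolding irrefl_def by auto
  then show ?thesis
    using not_interval_edge_if_nonadjacent_in_cliques[of V E C1 C2 x y u w] C1 C2 assms(3) uw(3,4)
    unfolding max_cliques_def by auto
qed

lemma consecutive_common_sections:
  assumes "card {i. i < length ps \<and> x \<in> sec i \<and> y \<in> sec i} \<ge> 2"
  obtains a where "Suc a < length ps" "{x, y} \<subseteq> sec a" "{x, y} \<subseteq> sec (Suc a)"
proof -
  let ?I = "{i. i < length ps \<and> x \<in> sec i \<and> y \<in> sec i}"
  have "\<not> card ?I \<le> Suc 0" using assms by simp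
  then obtain a b where "a \<in> ?I" "b \<in> ?I" "a < b"
    using card_le_Suc0_iff_eq[of ?I] by (auto simp: neq_iff)
  then have "Suc a < length ps" "{x, y} \<subseteq> sec a" "{x, y} \<subseteq> sec (Suc a)"
    using mem_sec_between[of a b x "Suc a"] mem_sec_between[of a b y "Suc a"] by auto
  then show ?thesis by (rule that)
qed

end

theorem mainTheorem4:
  fixes V :: "'a set" and E :: "('a \<times> 'a) set" and T :: "'a mpq"
    and pos :: "nat list" and ps :: "('a set \<times> 'a mpq option) list" and x y :: 'a
  assumes "interval_graph V E"
    and "mpq_tree V E T"
    and "(x, y) \<in> E"
    and "subtree_at T pos (QNode ps)"
    and "x \<in> own (QNode ps)" and "y \<in> own (QNode ps)"
    and "card {i. i < length ps \<and> x \<in> fst (ps ! i) \<and> y \<in> fst (ps ! i)} \<ge> 2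
         \<or> (\<exists>i < length ps. x \<in> fst (ps ! i) \<and> y \<in> fst (ps ! i) \<and>
               \<not> is_clique V E (verts_opt (snd (ps ! i))))"
  shows "\<not> interval_edge V E x y"
proof -
  \<comment> \<open>x, y \<in> own (QNode ps) is implied by the last hypothesis and not used\<close>
  interpret mpq_q_node V E T pos ps
    using assms(1,2,4) by unfold_locales
  from assms(7) show ?thesis
  proof
    assume "card {i. i < length ps \<and> x \<in> sec i \<and> y \<in> sec i} \<ge> 2"
    then obtain a where "Suc a < length ps" "{x, y} \<subseteq> sec a" "{x, y} \<subseteq> sec (Suc a)"
      by (rule consecutive_common_sections)
    then show ?thesis
      using not_interval_edge_if_consecutive_common_sections assms(3) by blast
  next
    assume "\<exists>i < length ps. x \<in> sec i \<and> y \<in> sec i \<and> \<not> is_clique V E (child_verts i)"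
    then obtain i where "i < length ps" "{x, y} \<subseteq> sec i" "\<not> is_clique V E (child_verts i)"
      by blast
    then show ?thesis
      using not_interval_edge_if_child_not_clique assms(3) by blast
  qed
qed

end
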